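(* Let $n\in\mathbb{N}$, $a<b$, and let $f\colon[a,b]\to\mathbb{R}$ be such that the pointwise derivative $f^{(n-1)}$ exists and is continuous on $[a,b]$. Then the distributional derivative $f^{(n)}$ belongs to $\mathcal{A}_c$. Define $E_n(f)$ by $$\int_a^b f(x)\,dx = \frac{1}{(n-1)!}\sum_{k=0}^{n-2}\left[\frac{(b-a)^{k+1}(2n-k-2)!\,(n-k-1)!}{2^{2k+1}(2n-2k-2)!\,(k+1)!}\right]\left[f^{(k)}(a)+(-1)^{k}f^{(k)}(b)\right]+R_n+E_n(f),$$ where $R_n=\frac{(b-a)^nf^{(n-1)}(a)}{n!\,2^{2n-2}}$ if $n$ is odd and $R_n=0$ if $n$ is even. Then $$|E_n(f)|\leq \frac{\|f^{(n)}\|\,(b-a)^{n}}{(n-1)!\,2^{2n-2}},$$ and this estimate is sharp in the sense that the coefficient of $\|f^{(n)}\|$ cannot be reduced.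
   Context: $\mathcal{A}_c$ is the space of Schwartz distributions $g$ on $(a,b)$ that are the distributional derivative $g=G'$ of some $G\in C([a,b])$ with $G(a)=0$ (i.e. $\langle G',\psi\rangle=-\int_a^bG\psi'$ for all $\psi\in C_c^\infty((a,b))$); the integral is defined by $\int_a^x g=G(x)$ (continuous primitive integral). The Alexiewicz norm is $\|g\|=\sup_{a\le x\le b}|\int_a^x g|=\|G\|_\infty$. In particular $\|f^{(n)}\|=\sup_{a\le x\le b}|f^{(n-1)}(x)-f^{(n-1)}(a)|$. *)

theory Defs
  imports "HOL-Analysis.Analysis"
begin

text \<open>Df k is the k-th pointwise derivative of f = Df 0 on [a,b] (one-sided at the
endpoints); Df (n-1) exists and is continuous on [a,b].\<close>
definition derivs_upto :: "nat \<Rightarrow> real \<Rightarrow> real \<Rightarrow> (nat \<Rightarrow> real \<Rightarrow> real) \<Rightarrow> bool" where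
  "derivs_upto n a b Df \<longleftrightarrow>
     (\<forall>k < n - 1. \<forall>x \<in> {a..b}.
        (Df k has_real_derivative Df (Suc k) x) (at x within {a..b}))
     \<and> continuous_on {a..b} (Df (n - 1))"

text \<open>Membership of the distribution g = G' in A_c, described through its primitive G
(the continuous primitive integral): G continuous on [a,b] with G a = 0.\<close>
definition Ac_primitive :: "real \<Rightarrow> real \<Rightarrow> (real \<Rightarrow> real) \<Rightarrow> bool" where
  "Ac_primitive a b G \<longleftrightarrow> continuous_on {a..b} G \<and> G a = 0"

text \<open>Alexiewicz norm of g = G', given its primitive G: sup over [a,b] of |G x|.\<close>
definition alex_norm :: "real \<Rightarrow> real \<Rightarrow> (real \<Rightarrow> real) \<Rightarrow> real" where
  "alex_norm a b G = (SUP x\<in>{a..b}. \<bar>G x\<bar>)"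

text \<open>Primitive of the distributional derivative f^(n): x \<mapsto> f^(n-1)(x) - f^(n-1)(a).\<close>
definition nth_deriv_primitive :: "nat \<Rightarrow> real \<Rightarrow> (nat \<Rightarrow> real \<Rightarrow> real) \<Rightarrow> real \<Rightarrow> real" where
  "nth_deriv_primitive n a Df = (\<lambda>x. Df (n - 1) x - Df (n - 1) a)"

definition quad_coeff :: "nat \<Rightarrow> real \<Rightarrow> real \<Rightarrow> nat \<Rightarrow> real" where
  "quad_coeff n a b k =
     (b - a) ^ (k + 1) * fact (2 * n - k - 2) * fact (n - k - 1)
     / (2 ^ (2 * k + 1) * fact (2 * n - 2 * k - 2) * fact (k + 1))"

definition R_term :: "nat \<Rightarrow> real \<Rightarrow> real \<Rightarrow> (nat \<Rightarrow> real \<Rightarrow> real) \<Rightarrow> real" where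
  "R_term n a b Df =
     (if odd n then (b - a) ^ n * Df (n - 1) a / (fact n * 2 ^ (2 * n - 2)) else 0)"

definition E_err :: "nat \<Rightarrow> real \<Rightarrow> real \<Rightarrow> (nat \<Rightarrow> real \<Rightarrow> real) \<Rightarrow> real" where
  "E_err n a b Df =
     integral {a..b} (Df 0)
     - (1 / fact (n - 1)) * (\<Sum>k<n - 1. quad_coeff n a b k * (Df k a + (-1) ^ k * Df k b))
     - R_term n a b Df"

end

theory Submission
  imports Defs
begin

text \<open>
  Write \<open>n = m + 1\<close>. Integrating by parts \<open>m\<close> times against polynomials \<open>P\<^sub>0 = 1, P\<^sub>1, \<dots>, P\<^sub>m\<close>
  with \<open>P\<^sub>j\<^sub>+\<^sub>1' = P\<^sub>j\<close>, suitably normalised at \<open>b\<close>, the boundary terms reproduce the quadrature sum,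
  and \<open>P\<^sub>m\<close> is the rescaled Chebyshev polynomial of the second kind
  \<open>W(x) = (b - a)\<^sup>m / (4\<^sup>m m!) U\<^sub>m((2x - a - b) / (b - a))\<close>. Since \<open>R\<^sub>n = (-1)\<^sup>m f\<^sup>(\<^sup>m\<^sup>)(a) \<integral>W\<close>,
  the error is \<open>E\<^sub>n(f) = (-1)\<^sup>m \<integral> (f\<^sup>(\<^sup>m\<^sup>)(x) - f\<^sup>(\<^sup>m\<^sup>)(a)) W(x) dx\<close>, so \<open>|E\<^sub>n(f)| \<le> \<parallel>f\<^sup>(\<^sup>n\<^sup>)\<parallel> \<integral>|W|\<close>.
  An antiderivative of \<open>W\<close> is a multiple of \<open>cos ((m + 1) arccos y)\<close>, which alternates between
  \<open>\<plusminus>\<close> its amplitude at the Chebyshev nodes; this gives \<open>\<integral>|W| = (b - a)\<^sup>n / (4\<^sup>m m!)\<close>.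
  For sharpness, continuous \<open>G\<close> with \<open>G(a) = 0\<close> and \<open>|G| \<le> 1\<close> make \<open>\<integral> G W\<close> arbitrarily close to
  \<open>\<integral>|W|\<close>, and every such \<open>G\<close> is \<open>f\<^sup>(\<^sup>m\<^sup>)\<close> for an \<open>m\<close>-fold primitive \<open>f\<close>.
\<close>

section \<open>Chebyshev polynomials of the second kind\<close>

fun chebyshev_U :: "nat \<Rightarrow> real \<Rightarrow> real" where
  "chebyshev_U 0 y = 1"
| "chebyshev_U (Suc 0) y = 2 * y"
| "chebyshev_U (Suc (Suc m)) y = 2 * y * chebyshev_U (Suc m) y - chebyshev_U m y"

lemma chebyshev_U_cos: "chebyshev_U m (cos t) * sin t = sin (real (Suc m) * t)"
proof (induction m t rule: chebyshev_U.induct)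
  case (3 m t)
  define A where "A = real (Suc (Suc m)) * t"
  have "chebyshev_U (Suc (Suc m)) (cos t) * sin t
      = 2 * cos t * (chebyshev_U (Suc m) (cos t) * sin t) - chebyshev_U m (cos t) * sin t"
    by (simp add: algebra_simps)
  also have "\<dots> = 2 * cos t * sin A - sin (A - t)"
    using 3 by (simp add: A_def algebra_simps)
  also have "\<dots> = sin (A + t)"
    by (simp add: sin_add sin_diff)
  finally show ?case
    by (simp add: A_def algebra_simps)
qed (simp_all add: sin_double)

lemma chebyshev_U_arccos:
  assumes "-1 < y" "y < 1"
  shows "chebyshev_U m y = sin (real (Suc m) * arccos y) / sin (arccos y)"
  using chebyshev_U_cos[of m "arccos y"] sin_arccos_nonzero[OF assms] assms
  by (simp add: field_simps)

lemma chebyshev_U_minus: "chebyshev_U m (-y) = (-1) ^ m * chebyshev_U m y"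
  by (induction m y rule: chebyshev_U.induct) (auto simp: algebra_simps)

definition chebyshev_U_coeff :: "nat \<Rightarrow> nat \<Rightarrow> real" where
  "chebyshev_U_coeff m j = (-4) ^ j * real ((m + j + 1) choose (2 * j + 1))"

lemma chebyshev_U_coeff_eq_0: "m < j \<Longrightarrow> chebyshev_U_coeff m j = 0"
  unfolding chebyshev_U_coeff_def by (subst binomial_eq_0) auto

lemma sum_chebyshev_U_coeff_extend:
  "m < L \<Longrightarrow> (\<Sum>j\<le>m. chebyshev_U_coeff m j * s ^ j) = (\<Sum>j<L. chebyshev_U_coeff m j * s ^ j)"
  by (rule sum.mono_neutral_left) (auto simp: chebyshev_U_coeff_eq_0)

lemma chebyshev_U_coeff_Suc_Suc:
  "chebyshev_U_coeff (Suc (Suc m)) j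
     = 2 * chebyshev_U_coeff (Suc m) j - chebyshev_U_coeff m j
       - 4 * (if j = 0 then 0 else chebyshev_U_coeff (Suc m) (j - 1))"
proof (cases j)
  case (Suc i)
  have "m + i + 4 = Suc (Suc (m + i + 2))" "m + i + 3 = Suc (m + i + 2)" "2 * i + 3 = Suc (Suc (2 * i + 1))"
    by auto
  then have "real ((m + i + 4) choose (2 * i + 3))
      = 2 * real ((m + i + 3) choose (2 * i + 3)) - real ((m + i + 2) choose (2 * i + 3))
        + real ((m + i + 2) choose (2 * i + 1))"
    by (simp only: binomial_Suc_Suc of_nat_add) simp
  then show ?thesis
    unfolding chebyshev_U_coeff_def Suc by (simp add: algebra_simps)
qed (simp add: chebyshev_U_coeff_def)

lemma chebyshev_U_expansion:
  "chebyshev_U m y = (\<Sum>j\<le>m. chebyshev_U_coeff m j * ((1 - y) / 2) ^ j)"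
proof (induction m y rule: chebyshev_U.induct)
  case (3 m y)
  define s where "s = (1 - y) / 2"
  define L where "L = m + 3"
  let ?S = "\<lambda>k N. \<Sum>j<N. chebyshev_U_coeff k j * s ^ j"
  have U1: "chebyshev_U (Suc m) y = ?S (Suc m) N" if "Suc m < N" for N
    using 3(1) sum_chebyshev_U_coeff_extend[OF that, of s] unfolding s_def by (rule trans)
  have U0: "chebyshev_U m y = ?S m (Suc L)"
    using 3 sum_chebyshev_U_coeff_extend[of m "Suc L" s] unfolding s_def L_def by simp
  have shift: "(\<Sum>j<Suc L. (if j = 0 then 0 else chebyshev_U_coeff (Suc m) (j - 1)) * s ^ j)
      = s * ?S (Suc m) L"
    by (subst sum.lessThan_Suc_shift) (simp add: sum_distrib_left algebra_simps)
  have "(\<Sum>j\<le>Suc (Suc m). chebyshev_U_coeff (Suc (Suc m)) j * s ^ j) = ?S (Suc (Suc m)) (Suc L)"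
    by (rule sum_chebyshev_U_coeff_extend) (simp add: L_def)
  also have "\<dots> = 2 * ?S (Suc m) (Suc L) - ?S m (Suc L)
      - 4 * (\<Sum>j<Suc L. (if j = 0 then 0 else chebyshev_U_coeff (Suc m) (j - 1)) * s ^ j)"
    by (simp add: chebyshev_U_coeff_Suc_Suc left_diff_distrib sum_subtractf sum_distrib_left
        mult.assoc del: sum.lessThan_Suc)
  also have "\<dots> = 2 * chebyshev_U (Suc m) y - chebyshev_U m y - 4 * (s * chebyshev_U (Suc m) y)"
    unfolding shift U0 using U1[of "Suc L"] U1[of L] by (simp add: L_def)
  also have "\<dots> = chebyshev_U (Suc (Suc m)) y"
    by (simp add: s_def field_simps)
  finally show ?case
    by (simp add: s_def)
qed (simp_all add: chebyshev_U_coeff_def binomial_eq_0 field_simps)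

section \<open>The Peano kernel\<close>

definition unit_coord :: "real \<Rightarrow> real \<Rightarrow> real \<Rightarrow> real" where
  "unit_coord a b x = (2 * x - a - b) / (b - a)"

definition peano_kernel :: "nat \<Rightarrow> real \<Rightarrow> real \<Rightarrow> real \<Rightarrow> real" where
  "peano_kernel m a b x = (b - a) ^ m / (4 ^ m * fact m) * chebyshev_U m (unit_coord a b x)"

definition kernel_amplitude :: "nat \<Rightarrow> real \<Rightarrow> real \<Rightarrow> real" where
  "kernel_amplitude m a b = (b - a) ^ Suc m / (2 * 4 ^ m * fact m * real (Suc m))"

definition kernel_antideriv :: "nat \<Rightarrow> real \<Rightarrow> real \<Rightarrow> real \<Rightarrow> real" where
  "kernel_antideriv m a b x = kernel_amplitude m a b * cos (real (Suc m) * arccos (unit_coord a b x))"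

text \<open>The Chebyshev nodes, listed from \<open>b\<close> down to \<open>a\<close>; they are the extrema of the antiderivative
  and the sign changes of the kernel.\<close>

definition chebyshev_node :: "nat \<Rightarrow> real \<Rightarrow> real \<Rightarrow> nat \<Rightarrow> real" where
  "chebyshev_node m a b k = (a + b) / 2 + (b - a) / 2 * cos (real k * pi / real (Suc m))"

lemma unit_coord_affine: "unit_coord a b = (\<lambda>x. (2 / (b - a)) * x - (a + b) / (b - a))"
  by (rule ext) (simp add: unit_coord_def diff_divide_distrib add_divide_distrib)

lemma continuous_on_unit_coord: "continuous_on S (unit_coord a b)"
  unfolding unit_coord_affine by (intro continuous_intros)

lemma has_real_derivative_unit_coord: "(unit_coord a b has_real_derivative 2 / (b - a)) (at x)"
proof -
  have "((\<lambda>x. (2 / (b - a)) * x - (a + b) / (b - a)) has_real_derivative 2 / (b - a) * 1 - 0) (at x)"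
    by (intro DERIV_diff DERIV_cmult DERIV_ident DERIV_const)
  then show ?thesis
    unfolding unit_coord_affine by simp
qed

lemma unit_coord_strict_mono: "a < b \<Longrightarrow> u < v \<Longrightarrow> unit_coord a b u < unit_coord a b v"
  by (simp add: unit_coord_def divide_strict_right_mono)

lemma unit_coord_bounds: "a < b \<Longrightarrow> x \<in> {a..b} \<Longrightarrow> -1 \<le> unit_coord a b x \<and> unit_coord a b x \<le> 1"
  by (auto simp: unit_coord_def field_simps)

lemma unit_coord_reflect: "a < b \<Longrightarrow> unit_coord a b (a + b - x) = - unit_coord a b x"
  by (simp add: unit_coord_def field_simps)

lemma unit_coord_chebyshev_node:
  "a < b \<Longrightarrow> unit_coord a b (chebyshev_node m a b k) = cos (real k * pi / real (Suc m))"
  by (simp add: unit_coord_def chebyshev_node_def field_simps)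

lemma continuous_on_peano_kernel: "continuous_on S (peano_kernel m a b)"
proof -
  have "chebyshev_U m = (\<lambda>y. \<Sum>j\<le>m. chebyshev_U_coeff m j * ((1 - y) / 2) ^ j)"
    using chebyshev_U_expansion by blast
  then have "continuous_on UNIV (chebyshev_U m)"
    by (auto intro!: continuous_intros)
  then show ?thesis
    unfolding peano_kernel_def
    by (intro continuous_intros continuous_on_compose2[OF _ continuous_on_unit_coord]) auto
qed

lemma peano_kernel_reflect: "a < b \<Longrightarrow> peano_kernel m a b (a + b - x) = (-1) ^ m * peano_kernel m a b x"
  unfolding peano_kernel_def by (simp add: unit_coord_reflect chebyshev_U_minus)

lemma continuous_on_kernel_antideriv: "a < b \<Longrightarrow> continuous_on {a..b} (kernel_antideriv m a b)"
  unfolding kernel_antideriv_def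
  by (intro continuous_intros continuous_on_unit_coord) (use unit_coord_bounds in auto)

lemma has_real_derivative_kernel_antideriv:
  assumes ab: "a < b" and x: "x \<in> {a<..<b}"
  shows "(kernel_antideriv m a b has_real_derivative peano_kernel m a b x) (at x)"
proof -
  define y where "y = unit_coord a b x"
  have y: "-1 < y" "y < 1"
    using x ab by (auto simp: y_def unit_coord_def field_simps)
  define N where "N = real (Suc m)"
  have "(kernel_antideriv m a b has_real_derivative
      kernel_amplitude m a b * (- sin (N * arccos y) * (N * (inverse (- sqrt (1 - y\<^sup>2)) * (2 / (b - a))))))
      (at x)"
    unfolding kernel_antideriv_def N_def[symmetric]
    using y has_real_derivative_unit_coord[of a b x]
    by (auto intro!: derivative_eq_intros simp: y_def)
  moreover have "kernel_amplitude m a b * (- sin (N * arccos y) * (N * (inverse (- sqrt (1 - y\<^sup>2)) * (2 / (b - a)))))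
      = peano_kernel m a b x"
  proof -
    define d where "d = b - a"
    have "d > 0" "N > 0" "sin (arccos y) \<noteq> 0"
      using ab sin_arccos_nonzero[OF y] by (auto simp: d_def N_def)
    then show ?thesis
      unfolding peano_kernel_def kernel_amplitude_def y_def[symmetric] chebyshev_U_arccos[OF y]
        sin_arccos[OF y(1)[THEN less_imp_le] y(2)[THEN less_imp_le], symmetric] N_def[symmetric]
        d_def[symmetric]
      by (simp add: field_simps power_Suc)
  qed
  ultimately show ?thesis by simp
qed

lemma chebyshev_node_0: "chebyshev_node m a b 0 = b"
  by (simp add: chebyshev_node_def field_simps)

lemma chebyshev_node_Suc_self: "chebyshev_node m a b (Suc m) = a"
  by (simp add: chebyshev_node_def field_simps del: of_nat_Suc)

lemma chebyshev_node_in_interval: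
  assumes "a < b"
  shows "chebyshev_node m a b k \<in> {a..b}"
proof -
  define c where "c = cos (real k * pi / real (Suc m))"
  have "(b - a) / 2 * (-1) \<le> (b - a) / 2 * c" "(b - a) / 2 * c \<le> (b - a) / 2 * 1"
    using assms by (intro mult_left_mono; simp add: c_def)+
  then show ?thesis
    unfolding chebyshev_node_def c_def[symmetric] by (simp add: field_simps)
qed

lemma chebyshev_node_antimono:
  assumes "a < b" "k < Suc m"
  shows "chebyshev_node m a b (Suc k) \<le> chebyshev_node m a b k"
proof -
  have "cos (real (Suc k) * pi / real (Suc m)) \<le> cos (real k * pi / real (Suc m))"
    using assms(2) by (intro cos_monotone_0_pi_le) (auto simp: field_simps)
  then show ?thesis
    using assms(1) unfolding chebyshev_node_def by (auto intro!: mult_left_mono)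
qed

lemma arccos_cos_multiple_pi:
  assumes "k \<le> Suc m"
  shows "arccos (cos (real k * pi / real (Suc m))) = real k * pi / real (Suc m)"
proof -
  have "real k * pi \<le> real (Suc m) * pi"
    using assms by (intro mult_right_mono) auto
  then show ?thesis
    by (intro arccos_cos) (auto simp: field_simps)
qed

lemma kernel_antideriv_chebyshev_node:
  assumes "a < b" "k \<le> Suc m"
  shows "kernel_antideriv m a b (chebyshev_node m a b k) = (-1) ^ k * kernel_amplitude m a b"
proof -
  have "real (Suc m) * (real k * pi / real (Suc m)) = real k * pi"
    by (simp del: of_nat_Suc)
  then show ?thesis
    using assms unfolding kernel_antideriv_def
    by (simp add: unit_coord_chebyshev_node arccos_cos_multiple_pi cos_npi del: of_nat_Suc)
qed

lemma peano_kernel_sign: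
  assumes ab: "a < b" and k: "k < Suc m"
    and x: "x \<in> {chebyshev_node m a b (Suc k)<..<chebyshev_node m a b k}"
  shows "0 \<le> (-1) ^ k * peano_kernel m a b x"
proof -
  define N where "N = real (Suc m)"
  define y where "y = unit_coord a b x"
  have y_bounds: "cos (real (Suc k) * pi / N) < y" "y < cos (real k * pi / N)"
    using x unit_coord_strict_mono[OF ab, of "chebyshev_node m a b (Suc k)" x]
      unit_coord_strict_mono[OF ab, of x "chebyshev_node m a b k"]
    by (auto simp: y_def N_def unit_coord_chebyshev_node[OF ab] simp del: of_nat_Suc)
  then have y: "-1 < y" "y < 1"
    by (smt (verit) cos_ge_minus_one cos_le_one)+
  define t where "t = arccos y"
  have t: "real k * pi / N < t" "t < real (Suc k) * pi / N"
    using arccos_less_arccos[of "cos (real (Suc k) * pi / N)" y] y_bounds y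
      arccos_less_arccos[of y "cos (real k * pi / N)"] k
      arccos_cos_multiple_pi[of k m] arccos_cos_multiple_pi[of "Suc k" m]
    by (auto simp: t_def N_def simp del: of_nat_Suc)
  have "real (Suc k) * pi / N \<le> pi" "0 \<le> real k * pi / N"
    using k by (auto simp: N_def field_simps)
  with t have "0 < t" "t < pi"
    by linarith+
  have "0 < N * t - real k * pi" "N * t - real k * pi < pi"
    using t by (auto simp: N_def field_simps simp del: of_nat_Suc) (simp add: algebra_simps)
  then have "sin t > 0" "sin (N * t - real k * pi) > 0"
    using \<open>0 < t\<close> \<open>t < pi\<close> by (auto intro: sin_gt_zero)
  moreover have "sin (N * t - real k * pi) = (-1) ^ k * sin (N * t)"
    by (simp add: sin_diff)
  ultimately have "(-1) ^ k * chebyshev_U m y > 0"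
    using chebyshev_U_arccos[OF y] by (simp add: t_def N_def)
  then show ?thesis
    using ab unfolding peano_kernel_def y_def[symmetric]
    by (simp add: mult.left_commute[of "(-1) ^ k"])
qed

lemma has_integral_abs_peano_kernel_between_nodes:
  assumes ab: "a < b" and k: "k < Suc m"
  shows "((\<lambda>x. \<bar>peano_kernel m a b x\<bar>) has_integral 2 * kernel_amplitude m a b)
    {chebyshev_node m a b (Suc k)..chebyshev_node m a b k}"
proof -
  let ?F = "\<lambda>x. (-1) ^ k * kernel_antideriv m a b x"
  have sub: "{chebyshev_node m a b (Suc k)..chebyshev_node m a b k} \<subseteq> {a..b}"
    using chebyshev_node_in_interval[OF ab] by auto
  have "((\<lambda>x. \<bar>peano_kernel m a b x\<bar>) has_integral
      ?F (chebyshev_node m a b k) - ?F (chebyshev_node m a b (Suc k)))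
      {chebyshev_node m a b (Suc k)..chebyshev_node m a b k}"
  proof (rule fundamental_theorem_of_calculus_interior)
    show "chebyshev_node m a b (Suc k) \<le> chebyshev_node m a b k"
      using chebyshev_node_antimono[OF ab k] .
    show "continuous_on {chebyshev_node m a b (Suc k)..chebyshev_node m a b k} ?F"
      by (intro continuous_intros continuous_on_subset[OF continuous_on_kernel_antideriv[OF ab] sub])
  next
    fix x assume x: "x \<in> {chebyshev_node m a b (Suc k)<..<chebyshev_node m a b k}"
    then have "(?F has_real_derivative (-1) ^ k * peano_kernel m a b x) (at x)"
      using sub by (intro DERIV_cmult has_real_derivative_kernel_antideriv ab) auto
    moreover have "\<bar>peano_kernel m a b x\<bar> = (-1) ^ k * peano_kernel m a b x"
      using peano_kernel_sign[OF ab k x] abs_of_nonneg by (fastforce simp: abs_mult)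
    ultimately show "(?F has_vector_derivative \<bar>peano_kernel m a b x\<bar>) (at x)"
      by (simp add: has_real_derivative_iff_has_vector_derivative)
  qed
  moreover have "?F (chebyshev_node m a b k) - ?F (chebyshev_node m a b (Suc k)) = 2 * kernel_amplitude m a b"
    using k by (simp add: kernel_antideriv_chebyshev_node[OF ab] flip: power_add)
  ultimately show ?thesis
    by simp
qed

lemma has_integral_abs_peano_kernel_from_node:
  assumes ab: "a < b"
  shows "j \<le> Suc m \<Longrightarrow> ((\<lambda>x. \<bar>peano_kernel m a b x\<bar>) has_integral real j * (2 * kernel_amplitude m a b))
    {chebyshev_node m a b j..b}"
proof (induction j)
  case 0
  show ?case
    using has_integral_refl(1)[of _ b] by (simp add: chebyshev_node_0)
next
  case (Suc j)
  have "((\<lambda>x. \<bar>peano_kernel m a b x\<bar>) has_integral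
      2 * kernel_amplitude m a b + real j * (2 * kernel_amplitude m a b)) {chebyshev_node m a b (Suc j)..b}"
    using Suc chebyshev_node_in_interval[OF ab]
    by (intro has_integral_combine[OF chebyshev_node_antimono[OF ab]]
        has_integral_abs_peano_kernel_between_nodes[OF ab]) auto
  then show ?case
    by (simp add: algebra_simps)
qed

lemma integral_abs_peano_kernel:
  assumes "a < b"
  shows "integral {a..b} (\<lambda>x. \<bar>peano_kernel m a b x\<bar>) = (b - a) ^ Suc m / (4 ^ m * fact m)"
proof -
  have "integral {a..b} (\<lambda>x. \<bar>peano_kernel m a b x\<bar>) = real (Suc m) * (2 * kernel_amplitude m a b)"
    using has_integral_abs_peano_kernel_from_node[OF assms order_refl]
    by (simp add: chebyshev_node_Suc_self integral_unique del: of_nat_Suc)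
  then show ?thesis
    by (simp add: kernel_amplitude_def)
qed

lemma integral_peano_kernel:
  assumes ab: "a < b"
  shows "integral {a..b} (peano_kernel m a b) = kernel_amplitude m a b * (1 - (-1) ^ Suc m)"
proof -
  have "(peano_kernel m a b has_integral kernel_antideriv m a b b - kernel_antideriv m a b a) {a..b}"
    using ab by (intro fundamental_theorem_of_calculus_interior continuous_on_kernel_antideriv)
      (auto simp flip: has_real_derivative_iff_has_vector_derivative
        intro!: has_real_derivative_kernel_antideriv)
  then show ?thesis
    using kernel_antideriv_chebyshev_node[OF ab, of 0 m] kernel_antideriv_chebyshev_node[OF ab, of "Suc m" m]
    by (simp add: chebyshev_node_0 chebyshev_node_Suc_self integral_unique algebra_simps del: power_Suc)
qed

section \<open>Iterated integration by parts\<close>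

lemma continuous_on_derivs_upto:
  assumes "derivs_upto n a b Df" "k \<le> n - 1"
  shows "continuous_on {a..b} (Df k)"
proof (cases "k = n - 1")
  case False
  with assms have "\<And>x. x \<in> {a..b} \<Longrightarrow> (Df k has_real_derivative Df (Suc k) x) (at x within {a..b})"
    by (simp add: derivs_upto_def)
  then show ?thesis
    by (rule DERIV_continuous_on)
qed (use assms in \<open>simp add: derivs_upto_def\<close>)

lemma integral_by_parts_step:
  assumes ab: "a \<le> b" and D: "derivs_upto n a b Df" and j: "Suc j \<le> n - 1"
    and P: "\<And>x. (P' has_real_derivative P x) (at x)"
  shows "integral {a..b} (\<lambda>x. P x * Df j x)
     = (P' b * Df j b - P' a * Df j a) - integral {a..b} (\<lambda>x. P' x * Df (Suc j) x)"
proof -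
  let ?I = "integral {a..b} (\<lambda>x. P' x * Df (Suc j) x)"
  let ?B = "P' b * Df j b - P' a * Df j a"
  have cP': "continuous_on {a..b} P'"
    by (rule DERIV_continuous_on[OF has_field_derivative_at_within[OF P]])
  have "(\<lambda>x. P' x * Df (Suc j) x) integrable_on {a..b}"
    using j by (intro integrable_continuous_real continuous_on_mult cP' continuous_on_derivs_upto[OF D]) auto
  then have int: "((\<lambda>x. P' x * Df (Suc j) x) has_integral ?B - (?B - ?I)) {a..b}"
    by (simp add: integrable_integral)
  have "((\<lambda>x. P x * Df j x) has_integral ?B - ?I) {a..b}"
  proof (rule integration_by_parts_interior[OF bounded_bilinear_mult ab cP' _ _ _ int])
    show "continuous_on {a..b} (Df j)"
      using j by (intro continuous_on_derivs_upto[OF D]) auto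
  next
    fix x assume x: "x \<in> {a<..<b}"
    show "(P' has_vector_derivative P x) (at x)"
      using P by (simp flip: has_real_derivative_iff_has_vector_derivative)
    have "(Df j has_real_derivative Df (Suc j) x) (at x within {a..b})"
      using D x j by (simp add: derivs_upto_def)
    then show "(Df j has_vector_derivative Df (Suc j) x) (at x)"
      using x by (simp add: at_within_Icc_at flip: has_real_derivative_iff_has_vector_derivative)
  qed
  then show ?thesis
    by (simp add: integral_unique)
qed

lemma integral_by_parts_iterated:
  assumes ab: "a \<le> b" and D: "derivs_upto n a b Df"
    and P: "\<And>j x. (P (Suc j) has_real_derivative P j x) (at x)"
  shows "j \<le> n - 1 \<Longrightarrow> integral {a..b} (\<lambda>x. P 0 x * Df 0 x)
    = (\<Sum>k<j. (-1) ^ k * (P (Suc k) b * Df k b - P (Suc k) a * Df k a))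
      + (-1) ^ j * integral {a..b} (\<lambda>x. P j x * Df j x)"
proof (induction j)
  case (Suc j)
  then have IH: "integral {a..b} (\<lambda>x. P 0 x * Df 0 x)
    = (\<Sum>k<j. (-1) ^ k * (P (Suc k) b * Df k b - P (Suc k) a * Df k a))
      + (-1) ^ j * integral {a..b} (\<lambda>x. P j x * Df j x)"
    by simp
  show ?case
    unfolding IH integral_by_parts_step[OF ab D Suc.prems P] by (simp add: algebra_simps)
qed simp

section \<open>Divided-power Appell polynomials\<close>

definition appell_poly :: "(nat \<Rightarrow> real) \<Rightarrow> real \<Rightarrow> nat \<Rightarrow> real \<Rightarrow> real" where
  "appell_poly c x\<^sub>0 j x = (\<Sum>i\<le>j. c (j - i) * (x - x\<^sub>0) ^ i / fact i)"

lemma appell_poly_0 [simp]: "appell_poly c x\<^sub>0 0 x = c 0"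
  by (simp add: appell_poly_def)

lemma appell_poly_at_base: "appell_poly c x\<^sub>0 j x\<^sub>0 = c j"
proof -
  have "(\<Sum>i\<le>j. c (j - i) * (x\<^sub>0 - x\<^sub>0) ^ i / fact i) = (\<Sum>i\<le>j. if i = 0 then c j else 0)"
    by (rule sum.cong) auto
  then show ?thesis
    by (simp add: appell_poly_def)
qed

lemma has_real_derivative_appell_poly:
  "(appell_poly c x\<^sub>0 (Suc j) has_real_derivative appell_poly c x\<^sub>0 j x) (at x)"
proof -
  have eq: "appell_poly c x\<^sub>0 (Suc j) = (\<lambda>x. c (Suc j) + (\<Sum>i\<le>j. c (j - i) / fact (Suc i) * (x - x\<^sub>0) ^ Suc i))"
    by (rule ext) (simp only: appell_poly_def sum.atMost_Suc_shift, simp)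
  have "((\<lambda>x. c (Suc j) + (\<Sum>i\<le>j. c (j - i) / fact (Suc i) * (x - x\<^sub>0) ^ Suc i)) has_real_derivative
      0 + (\<Sum>i\<le>j. c (j - i) / fact (Suc i) * ((1 + real i) * ((1 - 0) * (x - x\<^sub>0) ^ i)))) (at x)"
    by (intro DERIV_add DERIV_const DERIV_sum DERIV_cmult DERIV_power_Suc DERIV_diff DERIV_ident)
  moreover have "(\<Sum>i\<le>j. c (j - i) / fact (Suc i) * ((1 + real i) * ((1 - 0) * (x - x\<^sub>0) ^ i)))
      = appell_poly c x\<^sub>0 j x"
  proof -
    have "c (j - i) / fact (Suc i) * ((1 + real i) * ((1 - 0) * (x - x\<^sub>0) ^ i))
        = c (j - i) * (x - x\<^sub>0) ^ i / fact i" for i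
    proof -
      have cancel: "\<And>r F y. r \<noteq> 0 \<Longrightarrow> F \<noteq> 0 \<Longrightarrow> c (j - i) / (r * F) * (r * ((1 - 0) * y)) = c (j - i) * y / F"
        by (simp add: field_simps)
      have "fact (Suc i) = (1 + real i) * (fact i :: real)"
        by simp
      then show ?thesis
        by (simp only: cancel fact_nonzero) simp
    qed
    then show ?thesis
      by (simp add: appell_poly_def)
  qed
  ultimately show ?thesis
    unfolding eq by simp
qed

lemma has_real_derivative_reflection_parity:
  fixes f f' :: "real \<Rightarrow> real"
  assumes f': "\<And>x. (f has_real_derivative f' x) (at x)" and parity: "\<And>x. f x = s * f (c - x)"
  shows "f' x = - s * f' (c - x)"
proof -
  have "((\<lambda>x. s * f (c - x)) has_real_derivative s * (f' (c - x) * (0 - 1))) (at x)"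
    by (intro DERIV_cmult DERIV_chain2[OF f'] DERIV_diff DERIV_const DERIV_ident)
  moreover have "(\<lambda>x. s * f (c - x)) = f"
    by (rule ext) (rule parity[symmetric])
  ultimately have "(f has_real_derivative - s * f' (c - x)) (at x)"
    by simp
  then show ?thesis
    using DERIV_unique[OF f'] by blast
qed

section \<open>The error as a kernel integral\<close>

text \<open>Taylor coefficients at \<open>b\<close> of the polynomials \<open>P\<^sub>0 = 1, \<dots>, P\<^sub>m\<close> with \<open>P\<^sub>j\<^sub>+\<^sub>1' = P\<^sub>j\<close>
  whose boundary values produce the quadrature sum; \<open>P\<^sub>m\<close> turns out to be the Peano kernel.\<close>

definition peano_coeff :: "nat \<Rightarrow> real \<Rightarrow> real \<Rightarrow> nat \<Rightarrow> real" where
  "peano_coeff m a b j =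
     (if j = 0 then 1 else if j \<le> m then quad_coeff (Suc m) a b (j - 1) / fact m else 0)"

abbreviation peano_poly :: "nat \<Rightarrow> real \<Rightarrow> real \<Rightarrow> nat \<Rightarrow> real \<Rightarrow> real" where
  "peano_poly m a b \<equiv> appell_poly (peano_coeff m a b) b"

lemma peano_coeff_over_fact:
  assumes i: "i \<le> m"
  shows "peano_coeff m a b (m - i) / fact i
    = (b - a) ^ (m - i) * 4 ^ i * real ((m + i + 1) choose (2 * i + 1)) / (4 ^ m * fact m)"
proof (cases "i = m")
  case True
  have "(m + i + 1) choose (2 * i + 1) = 1"
    using True by (simp add: mult_2 del: binomial_Suc_Suc)
  then show ?thesis
    using True by (simp add: peano_coeff_def)
next
  case False
  define d where "d = m - i - 1"
  have m: "m = i + d + 1"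
    using False i by (simp add: d_def)
  have coeff: "peano_coeff m a b (m - i)
      = (b - a) ^ (d + 1) * fact (2 * i + d + 2) * fact (Suc i) / (2 ^ (2 * d + 1) * fact (2 * i + 2) * fact (d + 1)) / fact m"
  proof -
    have "peano_coeff m a b (m - i) = quad_coeff (Suc m) a b d / fact m"
      using False i by (simp add: peano_coeff_def d_def)
    moreover have "2 * Suc m - d - 2 = 2 * i + d + 2" "Suc m - d - 1 = Suc i" "2 * Suc m - 2 * d - 2 = 2 * i + 2"
      by (simp_all add: m)
    ultimately show ?thesis
      by (simp only: quad_coeff_def)
  qed
  have binom: "real ((m + i + 1) choose (2 * i + 1)) = fact (2 * i + d + 2) / (fact (2 * i + 1) * fact (d + 1))"
  proof -
    have idx: "m + i + 1 = 2 * i + d + 2" "2 * i + d + 2 - (2 * i + 1) = d + 1"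
      by (simp_all add: m)
    have "real ((2 * i + d + 2) choose (2 * i + 1))
        = fact (2 * i + d + 2) / (fact (2 * i + 1) * fact (2 * i + d + 2 - (2 * i + 1)))"
      by (rule binomial_fact) simp
    then show ?thesis
      unfolding idx .
  qed
  have fact2: "fact (2 * i + 2) = 2 * (real i + 1) * (fact (2 * i + 1) :: real)"
    using fact_Suc[of "2 * i + 1", where 'a = real] by (simp add: algebra_simps)
  have fact1: "fact (Suc i) = (real i + 1) * (fact i :: real)"
    by (simp add: algebra_simps)
  have pow4: "(4 :: real) ^ m = 4 ^ i * 2 ^ (2 * d + 1) * 2"
    by (simp add: m power_add power_mult)
  have cancel: "\<And>H A F P B C M Q r :: real. r > 0 \<Longrightarrow> F > 0 \<Longrightarrow> Q > 0 \<Longrightarrow>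
      H * A * (r * F) / (P * ((2 * r) * B) * C) / M / F = H * Q * (A / (B * C)) / (Q * P * 2 * M)"
    by (simp add: field_simps)
  have "m - i = d + 1"
    by (simp add: m)
  then show ?thesis
    unfolding coeff fact2 fact1 binom pow4 by (simp only:) (intro cancel; simp)
qed

lemma peano_poly_eq_kernel:
  assumes ab: "a < b"
  shows "peano_poly m a b m x = peano_kernel m a b x"
proof -
  have s: "(1 - unit_coord a b x) / 2 = (b - x) / (b - a)"
    using ab by (simp add: unit_coord_def field_simps)
  have "peano_coeff m a b (m - j) * (x - b) ^ j / fact j
      = (b - a) ^ m / (4 ^ m * fact m) * (chebyshev_U_coeff m j * ((b - x) / (b - a)) ^ j)"
    if j: "j \<le> m" for j
  proof -
    have split: "(b - a) ^ m = (b - a) ^ (m - j) * (b - a) ^ j"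
      using j by (simp flip: power_add)
    have sign: "(-4 :: real) ^ j * (b - x) ^ j = 4 ^ j * (x - b) ^ j"
      by (simp flip: power_mult_distrib)
    have cancel: "\<And>H w C D v q u T :: real. w * v = q * u \<Longrightarrow> T \<noteq> 0 \<Longrightarrow>
        H * w * C / D * v = H * T / D * (q * C * (u / T))"
      by (simp add: field_simps)
    have "peano_coeff m a b (m - j) * (x - b) ^ j / fact j = peano_coeff m a b (m - j) / fact j * (x - b) ^ j"
      by simp
    also have "\<dots> = (b - a) ^ m / (4 ^ m * fact m) * (chebyshev_U_coeff m j * ((b - x) / (b - a)) ^ j)"
      unfolding peano_coeff_over_fact[OF j] chebyshev_U_coeff_def split power_divide
      by (rule cancel) (use ab sign in auto)
    finally show ?thesis .
  qed
  then show ?thesis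
    unfolding appell_poly_def peano_kernel_def chebyshev_U_expansion s
    by (simp add: sum_distrib_left)
qed

lemma peano_poly_reflect:
  assumes ab: "a < b" and j: "j \<le> m"
  shows "peano_poly m a b j x = (-1) ^ j * peano_poly m a b j (a + b - x)"
  using j
proof (induction j arbitrary: x rule: inc_induct)
  case base
  have "(-1 :: real) ^ m * (-1) ^ m = 1"
    by (simp flip: power_add)
  then show ?case
    unfolding peano_poly_eq_kernel[OF ab] peano_kernel_reflect[OF ab] by (simp add: mult.assoc)
next
  case (step j)
  show ?case
    using has_real_derivative_reflection_parity[OF has_real_derivative_appell_poly step.IH, of x] by simp
qed

lemma peano_poly_at_left:
  "a < b \<Longrightarrow> j \<le> m \<Longrightarrow> peano_poly m a b j a = (-1) ^ j * peano_coeff m a b j"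
  using peano_poly_reflect[of a b j m a] by (simp add: appell_poly_at_base)

lemma boundary_terms_eq_quadrature_sum:
  assumes ab: "a < b"
  shows "(\<Sum>k<m. (-1) ^ k * (peano_poly m a b (Suc k) b * Df k b - peano_poly m a b (Suc k) a * Df k a))
    = (1 / fact m) * (\<Sum>k<m. quad_coeff (Suc m) a b k * (Df k a + (-1) ^ k * Df k b))"
  unfolding sum_distrib_left
proof (rule sum.cong)
  fix k assume k: "k \<in> {..<m}"
  have "(-1 :: real) ^ k * (-1) ^ k = 1"
    by (simp flip: power_add)
  moreover have "peano_coeff m a b (Suc k) = quad_coeff (Suc m) a b k / fact m"
    using k by (simp add: peano_coeff_def)
  ultimately show "(-1) ^ k * (peano_poly m a b (Suc k) b * Df k b - peano_poly m a b (Suc k) a * Df k a)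
     = 1 / fact m * (quad_coeff (Suc m) a b k * (Df k a + (-1) ^ k * Df k b))"
    using k by (simp add: peano_poly_at_left[OF ab] appell_poly_at_base algebra_simps)
qed simp

lemma R_term_eq_kernel_integral:
  assumes ab: "a < b"
  shows "R_term (Suc m) a b Df = (-1) ^ m * (Df m a * integral {a..b} (peano_kernel m a b))"
proof (cases "even m")
  case True
  have "R_term (Suc m) a b Df = (b - a) ^ Suc m * Df m a / (real (Suc m) * fact m * 4 ^ m)"
    using True unfolding R_term_def by (simp add: power_mult del: of_nat_Suc)
  then show ?thesis
    using True by (simp add: integral_peano_kernel[OF ab] kernel_amplitude_def field_simps del: of_nat_Suc)
qed (simp add: R_term_def integral_peano_kernel[OF ab])

theorem E_err_eq_kernel_integral:
  assumes ab: "a < b" and D: "derivs_upto (Suc m) a b Df"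
  shows "E_err (Suc m) a b Df = (-1) ^ m * integral {a..b} (\<lambda>x. (Df m x - Df m a) * peano_kernel m a b x)"
proof -
  let ?G = "\<lambda>x. (Df m x - Df m a) * peano_kernel m a b x"
  have iG: "?G integrable_on {a..b}"
    by (intro integrable_continuous_real continuous_intros continuous_on_peano_kernel
        continuous_on_derivs_upto[OF D]) simp
  have iW: "(\<lambda>x. Df m a * peano_kernel m a b x) integrable_on {a..b}"
    by (intro integrable_continuous_real continuous_intros continuous_on_peano_kernel)
  have eq: "(\<lambda>x. peano_poly m a b m x * Df m x) = (\<lambda>x. ?G x + Df m a * peano_kernel m a b x)"
    by (simp add: peano_poly_eq_kernel[OF ab] algebra_simps)
  have "integral {a..b} (Df 0) =
      (\<Sum>k<m. (-1) ^ k * (peano_poly m a b (Suc k) b * Df k b - peano_poly m a b (Suc k) a * Df k a))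
      + (-1) ^ m * integral {a..b} (\<lambda>x. peano_poly m a b m x * Df m x)"
    using integral_by_parts_iterated[OF less_imp_le[OF ab] D, of "peano_poly m a b" m]
      has_real_derivative_appell_poly
    by (simp add: peano_coeff_def)
  also have "integral {a..b} (\<lambda>x. peano_poly m a b m x * Df m x)
      = integral {a..b} (\<lambda>x. (Df m x - Df m a) * peano_kernel m a b x) + Df m a * integral {a..b} (peano_kernel m a b)"
    unfolding eq integral_add[OF iG iW] integral_mult_right ..
  finally show ?thesis
    unfolding E_err_def R_term_eq_kernel_integral[OF ab] boundary_terms_eq_quadrature_sum[OF ab]
    by (simp add: algebra_simps)
qed

lemma abs_le_alex_norm:
  assumes "continuous_on {a..b} G" "x \<in> {a..b}"
  shows "\<bar>G x\<bar> \<le> alex_norm a b G"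
proof -
  have "bounded ((\<lambda>x. \<bar>G x\<bar>) ` {a..b})"
    by (intro compact_imp_bounded compact_continuous_image continuous_intros assms) simp
  then show ?thesis
    unfolding alex_norm_def using assms(2) by (intro cSUP_upper bounded_imp_bdd_above)
qed

lemma alex_norm_le:
  assumes "a \<le> b" "\<And>x. x \<in> {a..b} \<Longrightarrow> \<bar>G x\<bar> \<le> C"
  shows "alex_norm a b G \<le> C"
  unfolding alex_norm_def using assms by (intro cSUP_least) auto

lemma abs_integral_mult_le_alex_norm:
  assumes "continuous_on {a..b} G" "continuous_on {a..b} W"
  shows "\<bar>integral {a..b} (\<lambda>x. G x * W x)\<bar> \<le> alex_norm a b G * integral {a..b} (\<lambda>x. \<bar>W x\<bar>)"
proof -
  have "norm (integral {a..b} (\<lambda>x. G x * W x)) \<le> integral {a..b} (\<lambda>x. alex_norm a b G * \<bar>W x\<bar>)"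
    using assms abs_le_alex_norm[OF assms(1)]
    by (intro integral_norm_bound_integral integrable_continuous_real continuous_intros)
      (auto simp: abs_mult intro: mult_right_mono)
  then show ?thesis
    by simp
qed

section \<open>The error estimate and its sharpness\<close>

lemma abs_E_err_le:
  assumes ab: "a < b" and D: "derivs_upto (Suc m) a b Df"
  shows "\<bar>E_err (Suc m) a b Df\<bar>
    \<le> alex_norm a b (nth_deriv_primitive (Suc m) a Df) * ((b - a) ^ Suc m / (4 ^ m * fact m))"
proof -
  let ?G = "nth_deriv_primitive (Suc m) a Df"
  have G: "continuous_on {a..b} ?G"
    unfolding nth_deriv_primitive_def by (intro continuous_intros continuous_on_derivs_upto[OF D]) simp
  have "\<bar>E_err (Suc m) a b Df\<bar> = \<bar>integral {a..b} (\<lambda>x. ?G x * peano_kernel m a b x)\<bar>"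
    by (simp add: E_err_eq_kernel_integral[OF ab D] abs_mult nth_deriv_primitive_def)
  also have "\<dots> \<le> alex_norm a b ?G * integral {a..b} (\<lambda>x. \<bar>peano_kernel m a b x\<bar>)"
    by (rule abs_integral_mult_le_alex_norm[OF G continuous_on_peano_kernel])
  finally show ?thesis
    by (simp only: integral_abs_peano_kernel[OF ab])
qed

lemma eventually_clamped_sign_cutoff_eq_abs:
  fixes w :: real
  assumes "a < x"
  shows "\<forall>\<^sub>F k in sequentially. max (-1) (min 1 (real k * w)) * min 1 (real k * (x - a)) * w = \<bar>w\<bar>"
proof (cases "w = 0")
  case False
  have "\<forall>\<^sub>F k in sequentially. Z < real k" for Z
    using filterlim_real_sequentially by (simp add: filterlim_at_top_dense)
  then have "\<forall>\<^sub>F k in sequentially. 1 / (x - a) < real k \<and> 1 / \<bar>w\<bar> < real k"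
    by (intro eventually_conj)
  then show ?thesis
  proof (rule eventually_mono)
    fix k assume "1 / (x - a) < real k \<and> 1 / \<bar>w\<bar> < real k"
    then have "1 < real k * (x - a)" "1 < real k * \<bar>w\<bar>"
      using assms False by (simp_all add: field_simps)
    moreover have "max (-1) (min 1 (real k * w)) = sgn w" if "1 < real k * \<bar>w\<bar>"
      using that False by (cases "w > 0") (simp_all add: abs_if sgn_if)
    ultimately show "max (-1) (min 1 (real k * w)) * min 1 (real k * (x - a)) * w = \<bar>w\<bar>"
      by (simp add: sgn_if)
  qed
qed simp

lemma continuous_sign_approximation:
  fixes W :: "real \<Rightarrow> real"
  assumes W: "continuous_on {a..b} W" and c: "c < integral {a..b} (\<lambda>x. \<bar>W x\<bar>)"
  obtains G where "continuous_on {a..b} G" "G a = 0" "\<And>x. x \<in> {a..b} \<Longrightarrow> \<bar>G x\<bar> \<le> 1"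
    "c < integral {a..b} (\<lambda>x. G x * W x)"
proof -
  define G :: "nat \<Rightarrow> real \<Rightarrow> real" where
    "G k x = max (-1) (min 1 (real k * W x)) * min 1 (real k * (x - a))" for k x
  have cont: "continuous_on {a..b} (G k)" for k
    unfolding G_def by (intro continuous_intros W)
  have bound: "\<bar>G k x\<bar> \<le> 1" if "x \<in> {a..b}" for k x
  proof -
    have "\<bar>max (-1) (min 1 (real k * W x))\<bar> \<le> 1" "\<bar>min 1 (real k * (x - a))\<bar> \<le> 1"
      using that by (simp_all add: abs_le_iff)
    then show ?thesis
      unfolding G_def abs_mult by (rule mult_le_one[OF _ abs_ge_zero])
  qed
  have "(\<lambda>k. integral {a..b} (\<lambda>x. G k x * W x)) \<longlonglongrightarrow> integral {a..b} (\<lambda>x. if x = a then 0 else \<bar>W x\<bar>)"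
  proof (rule dominated_convergence(2))
    show "(\<lambda>x. G k x * W x) integrable_on {a..b}" for k
      by (intro integrable_continuous_real continuous_intros cont W)
    show "(\<lambda>x. \<bar>W x\<bar>) integrable_on {a..b}"
      by (intro integrable_continuous_real continuous_intros W)
    show "norm (G k x * W x) \<le> \<bar>W x\<bar>" if "x \<in> {a..b}" for k x
      using bound[OF that, of k] by (simp add: abs_mult mult_left_le_one_le)
    show "(\<lambda>k. G k x * W x) \<longlonglongrightarrow> (if x = a then 0 else \<bar>W x\<bar>)" if "x \<in> {a..b}" for x
    proof (cases "x = a")
      case False
      then show ?thesis
        using that eventually_clamped_sign_cutoff_eq_abs[of a x "W x"]
        by (simp add: G_def tendsto_eventually)
    qed (simp add: G_def)
  qed
  moreover have "integral {a..b} (\<lambda>x. if x = a then 0 else \<bar>W x\<bar>) = integral {a..b} (\<lambda>x. \<bar>W x\<bar>)"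
    by (rule integral_spike[of "{a}"]) auto
  ultimately have "\<forall>\<^sub>F k in sequentially. c < integral {a..b} (\<lambda>x. G k x * W x)"
    using order_tendstoD(1)[OF _ c] by simp
  then obtain k where "c < integral {a..b} (\<lambda>x. G k x * W x)"
    unfolding eventually_sequentially by blast
  moreover have "G k a = 0"
    by (simp add: G_def)
  ultimately show ?thesis
    using that[OF cont] bound by blast
qed

lemma derivs_upto_iterated_primitive:
  assumes G: "continuous_on {a..b} G"
  shows "derivs_upto (Suc m) a b (\<lambda>j. ((\<lambda>h x. integral {a..x} h) ^^ (m - j)) G)"
proof -
  define prim where "prim i = ((\<lambda>h x. integral {a..x} h) ^^ i) G" for i
  have step: "continuous_on {a..b} (prim i) \<and>
      (\<forall>x\<in>{a..b}. (prim (Suc i) has_real_derivative prim i x) (at x within {a..b}))" for i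
  proof (induction i)
    case 0
    show ?case
      using G integral_has_real_derivative[OF G] by (simp add: prim_def)
  next
    case (Suc i)
    then have "continuous_on {a..b} (prim (Suc i))"
      by (intro DERIV_continuous_on) blast
    then show ?case
      using integral_has_real_derivative[of a b "prim (Suc i)"] by (simp add: prim_def)
  qed
  show ?thesis
    unfolding derivs_upto_def prim_def[symmetric]
  proof (intro conjI allI impI ballI)
    fix j x assume "j < Suc m - 1" "x \<in> {a..b}"
    moreover have "Suc (m - Suc j) = m - j"
      using \<open>j < Suc m - 1\<close> by simp
    ultimately show "(prim (m - j) has_real_derivative prim (m - Suc j) x) (at x within {a..b})"
      using step[of "m - Suc j"] by metis
  qed (use step[of 0] in simp)
qed

lemma E_err_sharp:
  assumes ab: "a < b" and c: "c < (b - a) ^ Suc m / (4 ^ m * fact m)"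
  shows "\<exists>Dg. derivs_upto (Suc m) a b Dg
    \<and> \<bar>E_err (Suc m) a b Dg\<bar> > c * alex_norm a b (nth_deriv_primitive (Suc m) a Dg)"
proof -
  have "max c 0 < integral {a..b} (\<lambda>x. \<bar>peano_kernel m a b x\<bar>)"
    using c ab by (simp add: integral_abs_peano_kernel)
  then obtain G where G: "continuous_on {a..b} G" "G a = 0" "\<And>x. x \<in> {a..b} \<Longrightarrow> \<bar>G x\<bar> \<le> 1"
    and gt: "max c 0 < integral {a..b} (\<lambda>x. G x * peano_kernel m a b x)"
    using continuous_sign_approximation[OF continuous_on_peano_kernel] by blast
  define Dg where "Dg j = ((\<lambda>h x. integral {a..x} h) ^^ (m - j)) G" for j
  have D: "derivs_upto (Suc m) a b Dg"
    unfolding Dg_def by (rule derivs_upto_iterated_primitive[OF G(1)])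
  have prim: "nth_deriv_primitive (Suc m) a Dg = G"
    by (simp add: nth_deriv_primitive_def Dg_def G(2))
  have norm: "0 \<le> alex_norm a b G" "alex_norm a b G \<le> 1"
    using abs_le_alex_norm[OF G(1), of a] alex_norm_le[of a b G 1] G(3) ab by auto
  then have "c * alex_norm a b G \<le> max c 0 * alex_norm a b G"
    by (intro mult_right_mono) auto
  also have "\<dots> \<le> max c 0"
    using norm by (intro mult_left_le) auto
  also have "\<dots> < \<bar>E_err (Suc m) a b Dg\<bar>"
    using gt by (simp add: E_err_eq_kernel_integral[OF ab D] abs_mult Dg_def G(2))
  finally show ?thesis
    using D prim by auto
qed

theorem theorem4p1:
  fixes n :: nat and a b :: real and Df :: "nat \<Rightarrow> real \<Rightarrow> real"
  assumes "n \<ge> 1" and "a < b" and "derivs_upto n a b Df"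
  shows "Ac_primitive a b (nth_deriv_primitive n a Df)
    \<and> \<bar>E_err n a b Df\<bar>
        \<le> alex_norm a b (nth_deriv_primitive n a Df) * (b - a) ^ n / (fact (n - 1) * 2 ^ (2 * n - 2))
    \<and> (\<forall>c < (b - a) ^ n / (fact (n - 1) * 2 ^ (2 * n - 2)).
         \<exists>Dg. derivs_upto n a b Dg \<and>
              \<bar>E_err n a b Dg\<bar> > c * alex_norm a b (nth_deriv_primitive n a Dg))"
proof -
  obtain m where n: "n = Suc m"
    using assms(1) by (cases n) auto
  have D: "derivs_upto (Suc m) a b Df"
    using assms(3) by (simp add: n)
  have const: "(b - a) ^ n / (fact (n - 1) * 2 ^ (2 * n - 2)) = (b - a) ^ Suc m / (4 ^ m * fact m)"
  proof -
    have "2 * n - 2 = 2 * m" "n - 1 = m" "(2 :: real) ^ (2 * m) = 4 ^ m"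
      by (simp_all add: n power_mult)
    then show ?thesis
      by (simp add: n mult.commute)
  qed
  have "Ac_primitive a b (nth_deriv_primitive n a Df)"
    unfolding Ac_primitive_def nth_deriv_primitive_def
    by (auto intro!: continuous_intros continuous_on_derivs_upto[OF assms(3)])
  moreover have "\<bar>E_err n a b Df\<bar>
      \<le> alex_norm a b (nth_deriv_primitive n a Df) * (b - a) ^ n / (fact (n - 1) * 2 ^ (2 * n - 2))"
    unfolding times_divide_eq_right[symmetric] const unfolding n by (rule abs_E_err_le[OF assms(2) D])
  moreover have "\<forall>c < (b - a) ^ n / (fact (n - 1) * 2 ^ (2 * n - 2)).
      \<exists>Dg. derivs_upto n a b Dg \<and> \<bar>E_err n a b Dg\<bar> > c * alex_norm a b (nth_deriv_primitive n a Dg)"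
    unfolding const unfolding n using E_err_sharp[OF assms(2)] by blast
  ultimately show ?thesis
    by blast
qed

end
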